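(* Let $L,L'$ be combinatorial tilings locally isomorphic to $K$, let $x\in L_{\mathrm{aff}}$, $x'\in L'_{\mathrm{aff}}$ and $0<\varepsilon\le 1/\sqrt2$. Let $\phi:B(x,\varepsilon^{-1},L)\to L'_{\mathrm{aff}}$ and $\phi':B(x',\varepsilon^{-1},L')\to L_{\mathrm{aff}}$ be continuous cell-preserving maps whose restriction to each cell is an isometry, such that $d(\phi(x),x')\le\varepsilon$, $d(\phi'(x'),x)\le\varepsilon$, and $\phi\circ\phi'=\mathrm{id}$ and $\phi'\circ\phi=\mathrm{id}$ wherever these compositions are defined. Then the restriction of $\phi$ to $B(x,\varepsilon^{-1}/6,L)$ is an isometry.
   Context: A combinatorial tiling is a 2-dimensional CW-complex homeomorphic to the plane. The combinatorial pentagonal tiling $K$ is the direct limit $K=\varinjlim K_n$, where $K_0$ is a decorated combinatorial pentagon (a closed disk with five distinguished boundary points), $K_n=\omega^n(K_0)$ for the pentagonal subdivision rule $\omega$ (each pentagon is replaced by six pentagons: a central one and a ring of five, each edge split in two, decorations of subtiles prescribed by the rule), and the embeddings $K_n\to K_{n+1}$ send central pentagon to central pentagon. $L$ is locally isomorphic to $K$ if every finite patch of $L$ is isomorphic by a cell-preserving decoration-preserving isomorphism to a patch of $K$. $L_{\mathrm{aff}}$ is $L$ with each edge isometric to $[0,1]$ and each face isometric to a Euclidean regular pentagon of side $1$, with $d$ the shortest-path length metric. $B(x,r,L)=\{y\in L_{\mathrm{aff}}: d(x,y)\le r\}$ is the metric ball. *)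

theory Defs
  imports "HOL-Analysis.Analysis" "HOL-Library.FSet"
begin

section \<open>The model regular pentagon of side 1\<close>

definition pent_r :: real where "pent_r = 1 / (2 * sin (pi / 5))"

definition ck :: "nat \<Rightarrow> complex" where
  "ck k = complex_of_real pent_r * cis (2 * pi * real k / 5)"

definition Pent :: "complex set" where
  "Pent = convex hull (ck ` {0..<5})"

text \<open>A tiling is given by a set of face indices and, for each face, the cyclic
 list of its five boundary vertices.\<close>
type_synonym ('v, 'f) tiling = "'f set \<times> ('f \<Rightarrow> 'v list)"

text \<open>Points of the affine realisation: vertices, interior points of edges
 (recorded canonically by the distances to both endpoints), interior points of faces.\<close>
datatype ('v, 'f) apt = PV 'v | PE "('v \<times> real) set" | PF 'f complex

definition cdim :: "('v, 'f) apt \<Rightarrow> nat" where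
  "cdim p = (case p of PV _ \<Rightarrow> 0 | PE _ \<Rightarrow> 1 | PF _ _ \<Rightarrow> 2)"

definition pt :: "('f \<Rightarrow> 'v list) \<Rightarrow> 'f \<Rightarrow> complex \<Rightarrow> ('v, 'f) apt" where
  "pt bd f z =
    (if \<exists>k<5. z = ck k then PV (bd f ! (SOME k. k < 5 \<and> z = ck k))
     else if \<exists>k<5. z \<in> open_segment (ck k) (ck (Suc k mod 5)) then
       (let k = (SOME k. k < 5 \<and> z \<in> open_segment (ck k) (ck (Suc k mod 5)))
        in PE {(bd f ! k, dist z (ck k)), (bd f ! (Suc k mod 5), dist z (ck (Suc k mod 5)))})
     else PF f z)"

definition Pts :: "('v, 'f) tiling \<Rightarrow> ('v, 'f) apt set" where
  "Pts L = {pt (snd L) f z | f z. f \<in> fst L \<and> z \<in> Pent}"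

definition cw_top :: "('v, 'f) tiling \<Rightarrow> ('v, 'f) apt topology" where
  "cw_top L = topology (\<lambda>U. U \<subseteq> Pts L \<and>
      (\<forall>f \<in> fst L. openin (top_of_set Pent) {z \<in> Pent. pt (snd L) f z \<in> U}))"

definition pent_tiling :: "('v, 'f) tiling \<Rightarrow> bool" where
  "pent_tiling L \<longleftrightarrow> (\<forall>f \<in> fst L. length (snd L f) = 5 \<and> distinct (snd L f))
     \<and> cw_top L homeomorphic_space (euclidean :: complex topology)"

text \<open>Strings in the sense of Bridson--Haefliger: sequences of straight segments,
 each inside one closed face.\<close>
fun chain :: "('v, 'f) tiling \<Rightarrow> ('v, 'f) apt \<Rightarrow> ('v, 'f) apt
      \<Rightarrow> ('f \<times> complex \<times> complex) list \<Rightarrow> bool" where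
  "chain L x y [] \<longleftrightarrow> x = y"
| "chain L x y ((f, z, w) # cs) \<longleftrightarrow>
     f \<in> fst L \<and> z \<in> Pent \<and> w \<in> Pent \<and> pt (snd L) f z = x \<and> chain L (pt (snd L) f w) y cs"

definition chain_len :: "('f \<times> complex \<times> complex) list \<Rightarrow> real" where
  "chain_len cs = sum_list (map (\<lambda>(f, z, w). dist z w) cs)"

definition adist :: "('v, 'f) tiling \<Rightarrow> ('v, 'f) apt \<Rightarrow> ('v, 'f) apt \<Rightarrow> real" where
  "adist L x y = Inf {chain_len cs | cs. chain L x y cs}"

definition aball :: "('v, 'f) tiling \<Rightarrow> ('v, 'f) apt \<Rightarrow> real \<Rightarrow> ('v, 'f) apt set" where
  "aball L x r = {y \<in> Pts L. adist L x y \<le> r}"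

definition dihedral_eq :: "'a list \<Rightarrow> 'a list \<Rightarrow> bool" where
  "dihedral_eq xs ys \<longleftrightarrow> (\<exists>k. ys = rotate k xs \<or> ys = rotate k (rev xs))"

definition patch_verts :: "('f \<Rightarrow> 'v list) \<Rightarrow> 'f set \<Rightarrow> 'v set" where
  "patch_verts bd P = (\<Union>f \<in> P. set (bd f))"

text \<open>Cell-preserving isomorphism between the patch P of (bd1) and the patch Q of (bd2).
 (Decorations = the five corner points, which are the vertices, hence automatically preserved.)\<close>
definition patch_iso :: "('f1 \<Rightarrow> 'v1 list) \<Rightarrow> 'f1 set \<Rightarrow> ('f2 \<Rightarrow> 'v2 list) \<Rightarrow> 'f2 set \<Rightarrow> bool" where
  "patch_iso bd1 P bd2 Q \<longleftrightarrow> (\<exists>\<sigma> \<psi>. bij_betw \<sigma> P Q \<and> inj_on \<psi> (patch_verts bd1 P) \<and>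
       (\<forall>f \<in> P. dihedral_eq (map \<psi> (bd1 f)) (bd2 (\<sigma> f))))"

text \<open>Vertices of the complexes K_n = omega^n(K_0): corners of K_0, midpoints of edges
 (named by the unordered pair of endpoints), and the five inner vertices of a subdivided face
 (named by the address of that face).\<close>
datatype vt = V0 nat | Mid "vt fset" | Inn "nat list" nat

text \<open>Subdivision of a pentagon with corners vs and inner vertices c: child 5 is the central
 pentagon, child j<5 is the ring pentagon containing the corner vs!(j+1).\<close>
definition child :: "(nat \<Rightarrow> vt) \<Rightarrow> nat \<Rightarrow> vt list \<Rightarrow> vt list" where
  "child c j vs =
    (if j = 5 then map c [0..<5]
     else [Mid {|vs ! j, vs ! (Suc j mod 5)|}, vs ! (Suc j mod 5),
           Mid {|vs ! (Suc j mod 5), vs ! (Suc (Suc j) mod 5)|},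
           c (Suc j mod 5), c j])"

text \<open>Faces of K_n are addresses w (length n, letters < 6); the head of w is the most recent
 subdivision step.\<close>
fun Kbd :: "nat list \<Rightarrow> vt list" where
  "Kbd [] = map V0 [0..<5]"
| "Kbd (j # w) = child (Inn w) j (Kbd w)"

definition Kfaces :: "nat \<Rightarrow> nat list set" where
  "Kfaces n = {w. length w = n \<and> set w \<subseteq> {0..<6}}"

text \<open>Every finite patch of K lies in (the image of) some K_n.\<close>
definition loc_iso_K :: "('v, 'f) tiling \<Rightarrow> bool" where
  "loc_iso_K L \<longleftrightarrow> (\<forall>P. P \<subseteq> fst L \<and> finite P \<longrightarrow>
      (\<exists>n Q. Q \<subseteq> Kfaces n \<and> patch_iso (snd L) P Kbd Q))"

definition edges :: "('v, 'f) tiling \<Rightarrow> ('v \<times> 'v) set" where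
  "edges L = {(snd L f ! k, snd L f ! (Suc k mod 5)) | f k. f \<in> fst L \<and> k < 5}"

definition epoint :: "'v \<Rightarrow> 'v \<Rightarrow> real \<Rightarrow> ('v, 'f) apt" where
  "epoint a b t = (if t = 0 then PV a else if t = 1 then PV b else PE {(a, t), (b, 1 - t)})"

definition cell_iso_map ::
  "('v1, 'f1) tiling \<Rightarrow> ('v1, 'f1) apt set \<Rightarrow> ('v2, 'f2) tiling
     \<Rightarrow> (('v1, 'f1) apt \<Rightarrow> ('v2, 'f2) apt) \<Rightarrow> bool" where
  "cell_iso_map L D L' \<phi> \<longleftrightarrow>
     (\<forall>y \<in> D. \<phi> y \<in> Pts L' \<and> cdim (\<phi> y) = cdim y) \<and>
     (\<forall>(a, b) \<in> edges L. \<exists>(a', b') \<in> edges L'. \<exists>T. \<forall>s \<in> {0..1}. \<forall>t \<in> {0..1}.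
         epoint a b s \<in> D \<longrightarrow> epoint a b t \<in> D \<longrightarrow>
         T s \<in> {0..1} \<and> \<phi> (epoint a b s) = epoint a' b' (T s) \<and> \<bar>T s - T t\<bar> = \<bar>s - t\<bar>) \<and>
     (\<forall>f \<in> fst L. \<exists>g \<in> fst L'. \<exists>T. \<forall>z \<in> Pent. \<forall>w \<in> Pent.
         pt (snd L) f z \<in> D \<longrightarrow> pt (snd L) f w \<in> D \<longrightarrow>
         T z \<in> Pent \<and> \<phi> (pt (snd L) f z) = pt (snd L') g (T z) \<and> dist (T z) (T w) = dist z w)"

definition acont_on ::
  "('v1, 'f1) tiling \<Rightarrow> ('v1, 'f1) apt set \<Rightarrow> ('v2, 'f2) tiling
     \<Rightarrow> (('v1, 'f1) apt \<Rightarrow> ('v2, 'f2) apt) \<Rightarrow> bool" where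
  "acont_on L D L' \<phi> \<longleftrightarrow> (\<forall>y \<in> D. \<forall>e > 0. \<exists>\<delta> > 0. \<forall>z \<in> D.
       adist L y z < \<delta> \<longrightarrow> adist L' (\<phi> y) (\<phi> z) < e)"

end

theory Submission
  imports Defs
begin

text \<open>The length metric is an infimum of lengths of chains of straight segments in closed
  faces, and a cellwise isometric map carries such a chain to one of the same length as long as
  all its nodes lie in its domain. A nearly shortest chain between two points near the centre of
  a ball stays inside the ball, so \<phi> does not increase distances on B(x, r/6), r = 1/\<epsilon>,
  and maps it into B(x', \<epsilon> + r/6). There \<phi>' inverts \<phi> and does not increase
  distances either, which gives the reverse inequality; \<epsilon> \<le> 1 / sqrt 2 means
  \<epsilon> \<le> r/2, which makes the radii fit.\<close>

lemma chain_len_Nil [simp]: "chain_len [] = 0"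
  by (simp add: chain_len_def)

lemma chain_len_Cons [simp]: "chain_len ((f, z, w) # cs) = dist z w + chain_len cs"
  by (simp add: chain_len_def)

lemma chain_len_append [simp]: "chain_len (cs @ ds) = chain_len cs + chain_len ds"
  by (simp add: chain_len_def)

lemma chain_len_nonneg: "0 \<le> chain_len cs"
  unfolding chain_len_def by (induction cs) auto

lemma chain_append: "chain L a b cs \<Longrightarrow> chain L b c ds \<Longrightarrow> chain L a c (cs @ ds)"
  by (induction L a b cs rule: chain.induct) auto

lemma chain_Pts: "chain L a b cs \<Longrightarrow> a \<in> Pts L \<Longrightarrow> b \<in> Pts L"
  by (induction L a b cs rule: chain.induct) (auto simp: Pts_def)

definition rev_chain :: "('f \<times> complex \<times> complex) list \<Rightarrow> ('f \<times> complex \<times> complex) list" where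
  "rev_chain cs = rev (map (\<lambda>(f, z, w). (f, w, z)) cs)"

lemma rev_chain_Nil [simp]: "rev_chain [] = []"
  by (simp add: rev_chain_def)

lemma rev_chain_Cons [simp]: "rev_chain ((f, z, w) # cs) = rev_chain cs @ [(f, w, z)]"
  by (simp add: rev_chain_def)

lemma chain_rev_chain: "chain L a b cs \<Longrightarrow> chain L b a (rev_chain cs)"
  by (induction L a b cs rule: chain.induct) (auto intro: chain_append)

lemma chain_len_rev_chain [simp]: "chain_len (rev_chain cs) = chain_len cs"
  by (induction cs) (auto simp: dist_commute)

definition chain_nodes ::
  "('v, 'f) tiling \<Rightarrow> ('v, 'f) apt \<Rightarrow> ('f \<times> complex \<times> complex) list \<Rightarrow> ('v, 'f) apt set" where
  "chain_nodes L a cs = insert a ((\<lambda>(f, z, w). pt (snd L) f w) ` set cs)"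

lemma chain_nodes_Nil [simp]: "chain_nodes L a [] = {a}"
  by (simp add: chain_nodes_def)

lemma chain_nodes_Cons [simp]:
  "chain_nodes L a ((f, z, w) # cs) = insert a (chain_nodes L (pt (snd L) f w) cs)"
  by (auto simp: chain_nodes_def)

lemma chain_nodes_start [simp]: "a \<in> chain_nodes L a cs"
  by (simp add: chain_nodes_def)

lemma chain_nodes_Pts: "chain L a b cs \<Longrightarrow> a \<in> Pts L \<Longrightarrow> chain_nodes L a cs \<subseteq> Pts L"
  by (induction L a b cs rule: chain.induct) (auto simp: Pts_def)

lemma chain_split_at_node:
  assumes "chain L a b cs" "p \<in> chain_nodes L a cs"
  shows "\<exists>ds es. chain L a p ds \<and> chain L p b es \<and> chain_len ds + chain_len es = chain_len cs"
  using assms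
proof (induction L a b cs rule: chain.induct)
  case (1 L x y)
  then show ?case by (intro exI[of _ "[]"]) auto
next
  case (2 L x y f z w cs)
  show ?case
  proof (cases "p = x")
    case True
    with "2.prems" show ?thesis by (intro exI[of _ "[]"] exI[of _ "(f, z, w) # cs"]) auto
  next
    case False
    with "2.prems" obtain ds es where
      "chain L (pt (snd L) f w) p ds" "chain L p y es" "chain_len ds + chain_len es = chain_len cs"
      using "2.IH" by auto
    with "2.prems" show ?thesis by (intro exI[of _ "(f, z, w) # ds"] exI[of _ es]) auto
  qed
qed

lemma bdd_below_chain_lens: "bdd_below {chain_len cs | cs. chain L a b cs}"
  by (rule bdd_belowI[of _ 0]) (auto simp: chain_len_nonneg)

lemma adist_le_chain_len: "chain L a b cs \<Longrightarrow> adist L a b \<le> chain_len cs"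
  unfolding adist_def by (rule cInf_lower[OF _ bdd_below_chain_lens]) blast

text \<open>Without a chain from a to b, adist L a b is the junk value Inf {}, hence the
  chain hypotheses below.\<close>

lemma adist_nonneg: "chain L a b cs \<Longrightarrow> 0 \<le> adist L a b"
  unfolding adist_def by (rule cInf_greatest) (auto simp: chain_len_nonneg)

lemma adist_self [simp]: "adist L a a = 0"
  using adist_le_chain_len[of L a a "[]"] adist_nonneg[of L a a "[]"] by simp

lemma adist_commute: "adist L a b = adist L b a"
proof -
  have "{chain_len cs | cs. chain L a b cs} \<subseteq> {chain_len cs | cs. chain L b a cs}" for a b
  proof
    fix l assume "l \<in> {chain_len cs | cs. chain L a b cs}"
    then obtain cs where "chain L a b cs" "l = chain_len cs" by blast
    then have "chain L b a (rev_chain cs)" "l = chain_len (rev_chain cs)"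
      by (simp_all add: chain_rev_chain)
    then show "l \<in> {chain_len cs | cs. chain L b a cs}" by blast
  qed
  from this[of a b] this[of b a]
  have "{chain_len cs | cs. chain L a b cs} = {chain_len cs | cs. chain L b a cs}"
    by (rule subset_antisym)
  then show ?thesis by (simp add: adist_def)
qed

lemma chain_shorter_than:
  assumes "chain L a b cs0" "adist L a b < l"
  obtains cs where "chain L a b cs" "chain_len cs < l"
proof -
  have "\<not> (\<forall>cs. chain L a b cs \<longrightarrow> l \<le> chain_len cs)"
  proof
    assume "\<forall>cs. chain L a b cs \<longrightarrow> l \<le> chain_len cs"
    then have "l \<le> adist L a b"
      unfolding adist_def using assms(1) by (intro cInf_greatest) blast+
    with assms(2) show False by simp
  qed
  then show thesis using that by (meson not_le)
qed

lemma adist_triangle: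
  assumes "chain L a b cs" "chain L b c ds"
  shows "adist L a c \<le> adist L a b + adist L b c"
proof (rule field_le_epsilon)
  fix e :: real assume "0 < e"
  then obtain cs' ds' where "chain L a b cs'" "chain_len cs' < adist L a b + e / 2"
      and "chain L b c ds'" "chain_len ds' < adist L b c + e / 2"
    using chain_shorter_than[OF assms(1)] chain_shorter_than[OF assms(2)] by (metis less_add_same_cancel1 half_gt_zero)
  moreover have "adist L a c \<le> chain_len cs' + chain_len ds'"
    using adist_le_chain_len[OF chain_append[OF \<open>chain L a b cs'\<close> \<open>chain L b c ds'\<close>]] by simp
  ultimately show "adist L a c \<le> adist L a b + adist L b c + e" by linarith
qed

lemma openin_cw_top:
  "openin (cw_top L) U \<longleftrightarrow>
     U \<subseteq> Pts L \<and> (\<forall>f \<in> fst L. openin (top_of_set Pent) {z \<in> Pent. pt (snd L) f z \<in> U})"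
proof -
  define P where "P U \<longleftrightarrow>
    U \<subseteq> Pts L \<and> (\<forall>f \<in> fst L. openin (top_of_set Pent) {z \<in> Pent. pt (snd L) f z \<in> U})"
    for U
  have "istopology P"
    unfolding istopology_def
  proof (intro conjI allI impI)
    fix S T assume "P S" "P T"
    moreover have "{z \<in> Pent. pt (snd L) f z \<in> S \<inter> T} =
        {z \<in> Pent. pt (snd L) f z \<in> S} \<inter> {z \<in> Pent. pt (snd L) f z \<in> T}" for f
      by blast
    ultimately show "P (S \<inter> T)" by (auto simp: P_def)
  next
    fix K assume "\<forall>U \<in> K. P U"
    moreover have "{z \<in> Pent. pt (snd L) f z \<in> \<Union>K} = (\<Union>U \<in> K. {z \<in> Pent. pt (snd L) f z \<in> U})"
      for f
      by blast
    ultimately show "P (\<Union>K)" by (auto simp: P_def intro!: openin_Union)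
  qed
  then show ?thesis unfolding cw_top_def P_def[abs_def] by simp
qed

lemma pt_in_Pts: "f \<in> fst L \<Longrightarrow> z \<in> Pent \<Longrightarrow> pt (snd L) f z \<in> Pts L"
  by (auto simp: Pts_def)

lemma openin_cw_top_face_saturated:
  assumes "U \<subseteq> Pts L"
    and "\<And>f z w. f \<in> fst L \<Longrightarrow> z \<in> Pent \<Longrightarrow> w \<in> Pent \<Longrightarrow> pt (snd L) f z \<in> U \<Longrightarrow> pt (snd L) f w \<in> U"
  shows "openin (cw_top L) U"
proof -
  show ?thesis unfolding openin_cw_top
  proof (intro conjI ballI)
    fix f assume "f \<in> fst L"
    then consider "{z \<in> Pent. pt (snd L) f z \<in> U} = {}" | "{z \<in> Pent. pt (snd L) f z \<in> U} = Pent"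
      using assms(2) by blast
    then show "openin (top_of_set Pent) {z \<in> Pent. pt (snd L) f z \<in> U}"
      by cases (simp_all only: openin_empty openin_subtopology_self)
  qed (rule assms(1))
qed

lemma topspace_cw_top: "topspace (cw_top L) = Pts L"
proof
  show "topspace (cw_top L) \<subseteq> Pts L"
    using openin_topspace[of "cw_top L"] unfolding openin_cw_top by (rule conjunct1)
  show "Pts L \<subseteq> topspace (cw_top L)"
    by (rule openin_subset, rule openin_cw_top_face_saturated) (auto intro: pt_in_Pts)
qed

lemma connected_space_cw_top: "pent_tiling L \<Longrightarrow> connected_space (cw_top L)"
  unfolding pent_tiling_def
  by (metis homeomorphic_connected_space connected_UNIV connectedin_iff_connected
      connectedin_topspace topspace_euclidean)

lemma pent_tiling_chain_exists:
  assumes "pent_tiling L" "a \<in> Pts L" "b \<in> Pts L"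
  obtains cs where "chain L a b cs"
proof -
  define R where "R = {p. \<exists>cs. chain L a p cs}"
  have R_closed: "pt (snd L) f w \<in> R"
    if "f \<in> fst L" "z \<in> Pent" "w \<in> Pent" "pt (snd L) f z \<in> R" for f z w
  proof -
    from that(4) obtain cs where "chain L a (pt (snd L) f z) cs" by (auto simp: R_def)
    from chain_append[OF this, of "pt (snd L) f w" "[(f, z, w)]"] that(1-3)
    show ?thesis by (auto simp: R_def)
  qed
  have "R \<subseteq> Pts L" by (auto simp: R_def intro: chain_Pts[OF _ assms(2)])
  then have "openin (cw_top L) R" "openin (cw_top L) (Pts L - R)"
    using R_closed by (auto intro!: openin_cw_top_face_saturated intro: pt_in_Pts)
  moreover have "a \<in> R" by (auto simp: R_def intro: exI[of _ "[]"])
  ultimately have "Pts L - R = {}"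
    using connected_space_cw_top[OF assms(1)] \<open>R \<subseteq> Pts L\<close>
    unfolding connected_space_eq topspace_cw_top by blast
  with assms(3) show thesis using that by (auto simp: R_def)
qed

lemma adist_triangle_Pts:
  assumes "pent_tiling L" "a \<in> Pts L" "b \<in> Pts L" "c \<in> Pts L"
  shows "adist L a c \<le> adist L a b + adist L b c"
  by (metis adist_triangle pent_tiling_chain_exists assms)

lemma adist_nonneg_Pts: "pent_tiling L \<Longrightarrow> a \<in> Pts L \<Longrightarrow> b \<in> Pts L \<Longrightarrow> 0 \<le> adist L a b"
  by (metis adist_nonneg pent_tiling_chain_exists)

lemma aball_mono: "r \<le> s \<Longrightarrow> aball L c r \<subseteq> aball L c s"
  by (auto simp: aball_def)

lemma adist_le_aball_diameter:
  assumes "pent_tiling L" "c \<in> Pts L" "y \<in> aball L c r" "z \<in> aball L c r"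
  shows "adist L y z \<le> 2 * r"
  using adist_triangle_Pts[OF assms(1), of y c z] assms adist_commute[of L y c]
  by (auto simp: aball_def)

lemma adist_chain_node_le:
  assumes "pent_tiling L" "c \<in> Pts L" "y \<in> Pts L" "z \<in> Pts L"
    and "chain L y z cs" "p \<in> chain_nodes L y cs"
  shows "2 * adist L c p \<le> adist L c y + adist L c z + chain_len cs"
proof -
  obtain ds es where ds: "chain L y p ds" and es: "chain L p z es"
    and len: "chain_len ds + chain_len es = chain_len cs"
    using chain_split_at_node[OF assms(5,6)] by blast
  have "p \<in> Pts L" using chain_Pts[OF ds assms(3)] .
  have "adist L c p \<le> adist L c y + adist L y p" "adist L c p \<le> adist L c z + adist L z p"
    using adist_triangle_Pts assms(1-4) \<open>p \<in> Pts L\<close> by blast+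
  moreover have "adist L y p \<le> chain_len ds" using adist_le_chain_len[OF ds] .
  moreover have "adist L z p \<le> chain_len es" using adist_le_chain_len[OF chain_rev_chain[OF es]] by simp
  ultimately show ?thesis using len by linarith
qed

lemma cell_iso_map_Pts: "cell_iso_map L D L' \<phi> \<Longrightarrow> y \<in> D \<Longrightarrow> \<phi> y \<in> Pts L'"
  by (simp add: cell_iso_map_def)

lemma cell_iso_map_segment:
  assumes "cell_iso_map L D L' \<phi>" "f \<in> fst L" "z \<in> Pent" "w \<in> Pent"
    and "pt (snd L) f z \<in> D" "pt (snd L) f w \<in> D"
  obtains g z' w' where "chain L' (\<phi> (pt (snd L) f z)) (\<phi> (pt (snd L) f w)) [(g, z', w')]"
    and "dist z' w' = dist z w"
proof -
  obtain g T where "g \<in> fst L'" and T: "\<forall>z \<in> Pent. \<forall>w \<in> Pent.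
      pt (snd L) f z \<in> D \<longrightarrow> pt (snd L) f w \<in> D \<longrightarrow>
      T z \<in> Pent \<and> \<phi> (pt (snd L) f z) = pt (snd L') g (T z) \<and> dist (T z) (T w) = dist z w"
    using assms(1,2) unfolding cell_iso_map_def by blast
  with assms(3-6) show thesis by (intro that[of g "T z" "T w"]) auto
qed

lemma cell_iso_map_chain:
  assumes "cell_iso_map L D L' \<phi>" "chain L a b cs" "chain_nodes L a cs \<subseteq> D"
  shows "\<exists>cs'. chain L' (\<phi> a) (\<phi> b) cs' \<and> chain_len cs' = chain_len cs"
  using assms(2,3)
proof (induction cs arbitrary: a)
  case Nil
  then show ?case by (intro exI[of _ "[]"]) simp
next
  case (Cons e cs)
  obtain f z w where e: "e = (f, z, w)" by (cases e)
  with Cons.prems have a: "a = pt (snd L) f z" and "pt (snd L) f w \<in> D"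
    and segment: "f \<in> fst L" "z \<in> Pent" "w \<in> Pent" by auto
  with Cons.prems e obtain g z' w' where
    "chain L' (\<phi> a) (\<phi> (pt (snd L) f w)) [(g, z', w')]" "dist z' w' = dist z w"
    using cell_iso_map_segment[OF assms(1) segment] by auto
  moreover obtain cs' where "chain L' (\<phi> (pt (snd L) f w)) (\<phi> b) cs'" "chain_len cs' = chain_len cs"
    using Cons.IH Cons.prems e by auto
  ultimately show ?case using e by (intro exI[of _ "(g, z', w') # cs'"]) auto
qed

text \<open>A nearly shortest chain from y to z has all its nodes within distance
  (2\<rho> + adist L y z) / 2 < R of c, so \<phi> carries it to a chain of the same length.\<close>

lemma cell_iso_map_adist_le:
  assumes "pent_tiling L" "cell_iso_map L (aball L c R) L' \<phi>" "c \<in> Pts L"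
    and "y \<in> aball L c \<rho>" "z \<in> aball L c \<rho>" "2 * \<rho> + adist L y z < 2 * R"
  shows "adist L' (\<phi> y) (\<phi> z) \<le> adist L y z"
proof (rule field_le_epsilon)
  fix e :: real assume "0 < e"
  define \<delta> where "\<delta> = min e (2 * R - 2 * \<rho> - adist L y z)"
  have "0 < \<delta>" using \<open>0 < e\<close> assms(6) by (simp add: \<delta>_def)
  have "y \<in> Pts L" "z \<in> Pts L" using assms(4,5) by (simp_all add: aball_def)
  then obtain cs where cs: "chain L y z cs" and short: "chain_len cs < adist L y z + \<delta>"
    by (metis pent_tiling_chain_exists[OF assms(1)] chain_shorter_than \<open>0 < \<delta>\<close> less_add_same_cancel1)
  have "chain_nodes L y cs \<subseteq> aball L c R"
  proof
    fix p assume p: "p \<in> chain_nodes L y cs"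
    have "2 * adist L c p \<le> adist L c y + adist L c z + chain_len cs"
      using adist_chain_node_le[OF assms(1,3) \<open>y \<in> Pts L\<close> \<open>z \<in> Pts L\<close> cs p] .
    moreover have "p \<in> Pts L" using chain_nodes_Pts[OF cs \<open>y \<in> Pts L\<close>] p by blast
    ultimately show "p \<in> aball L c R"
      using assms(4,5) short by (auto simp: aball_def \<delta>_def)
  qed
  then obtain cs' where "chain L' (\<phi> y) (\<phi> z) cs'" "chain_len cs' = chain_len cs"
    using cell_iso_map_chain[OF assms(2) cs] by blast
  then show "adist L' (\<phi> y) (\<phi> z) \<le> adist L y z + e"
    using adist_le_chain_len short by (fastforce simp: \<delta>_def)
qed

lemma cell_iso_map_adist_le_aball:
  assumes "pent_tiling L" "cell_iso_map L (aball L c R) L' \<phi>" "c \<in> Pts L" "2 * \<rho> < R"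
    and "y \<in> aball L c \<rho>" "z \<in> aball L c \<rho>"
  shows "adist L' (\<phi> y) (\<phi> z) \<le> adist L y z"
  using cell_iso_map_adist_le[OF assms(1-3,5,6)] adist_le_aball_diameter[OF assms(1,3,5,6)] assms(4)
  by linarith

lemma cell_iso_map_aball_image:
  assumes "pent_tiling L" "pent_tiling L'" "cell_iso_map L (aball L c R) L' \<phi>"
    and "c \<in> Pts L" "c' \<in> Pts L'" "2 * \<rho> < R" "adist L' c' (\<phi> c) \<le> \<delta>"
    and "y \<in> aball L c \<rho>"
  shows "\<phi> y \<in> aball L' c' (\<delta> + \<rho>)"
proof -
  have "0 \<le> \<rho>" using adist_nonneg_Pts[OF assms(1,4)] assms(8) by (force simp: aball_def)
  then have "c \<in> aball L c \<rho>" using assms(4) by (simp add: aball_def)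
  then have "adist L' (\<phi> c) (\<phi> y) \<le> \<rho>"
    using cell_iso_map_adist_le_aball[OF assms(1,3,4,6) _ assms(8)] assms(8) by (force simp: aball_def)
  moreover have "\<phi> c \<in> Pts L'" "\<phi> y \<in> Pts L'"
    using cell_iso_map_Pts[OF assms(3)] \<open>c \<in> aball L c \<rho>\<close> assms(6,8) \<open>0 \<le> \<rho>\<close>
      aball_mono[of \<rho> R L c] by auto
  ultimately show ?thesis
    using adist_triangle_Pts[OF assms(2,5), of "\<phi> c" "\<phi> y"] assms(7) by (simp add: aball_def)
qed

lemma le_half_inverse_if_le_inverse_sqrt2:
  fixes e :: real assumes "0 < e" "e \<le> 1 / sqrt 2"
  shows "e \<le> 1 / e / 2"
proof -
  have "e * e \<le> 1 / sqrt 2 * (1 / sqrt 2)" using assms by (intro mult_mono) auto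
  with assms(1) show ?thesis by (simp add: field_simps)
qed

theorem lemma2p5:
  fixes L :: "('v1, 'f1) tiling" and L' :: "('v2, 'f2) tiling"
    and x :: "('v1, 'f1) apt" and x' :: "('v2, 'f2) apt" and \<epsilon> :: real
    and \<phi> :: "('v1, 'f1) apt \<Rightarrow> ('v2, 'f2) apt" and \<phi>' :: "('v2, 'f2) apt \<Rightarrow> ('v1, 'f1) apt"
  assumes "pent_tiling L" "loc_iso_K L" "pent_tiling L'" "loc_iso_K L'"
    and "x \<in> Pts L" "x' \<in> Pts L'"
    and "0 < \<epsilon>" "\<epsilon> \<le> 1 / sqrt 2"
    and "acont_on L (aball L x (1 / \<epsilon>)) L' \<phi>" "cell_iso_map L (aball L x (1 / \<epsilon>)) L' \<phi>"
    and "acont_on L' (aball L' x' (1 / \<epsilon>)) L \<phi>'" "cell_iso_map L' (aball L' x' (1 / \<epsilon>)) L \<phi>'"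
    and "adist L' (\<phi> x) x' \<le> \<epsilon>" "adist L (\<phi>' x') x \<le> \<epsilon>"
    and "\<forall>y \<in> aball L' x' (1 / \<epsilon>). \<phi>' y \<in> aball L x (1 / \<epsilon>) \<longrightarrow> \<phi> (\<phi>' y) = y"
    and "\<forall>y \<in> aball L x (1 / \<epsilon>). \<phi> y \<in> aball L' x' (1 / \<epsilon>) \<longrightarrow> \<phi>' (\<phi> y) = y"
  shows "\<forall>y \<in> aball L x (1 / \<epsilon> / 6). \<forall>z \<in> aball L x (1 / \<epsilon> / 6).
           adist L' (\<phi> y) (\<phi> z) = adist L y z"
proof -
  define r where "r = 1 / \<epsilon>"
  have "0 < r" "\<epsilon> \<le> r / 2"
    using assms(7) le_half_inverse_if_le_inverse_sqrt2[OF assms(7,8)] by (simp_all add: r_def)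
  note cim = assms(10,12)[folded r_def]
  have shorten: "adist L' (\<phi> y) (\<phi> z) \<le> adist L y z"
    if "y \<in> aball L x (r / 6)" "z \<in> aball L x (r / 6)" for y z
    using cell_iso_map_adist_le_aball[OF assms(1) cim(1) assms(5) _ that] \<open>0 < r\<close> by simp
  have image: "\<phi> y \<in> aball L' x' (\<epsilon> + r / 6)" if "y \<in> aball L x (r / 6)" for y
    using cell_iso_map_aball_image[OF assms(1,3) cim(1) assms(5,6) _ _ that] assms(13) \<open>0 < r\<close>
    by (simp add: adist_commute)
  have inverse: "\<phi>' (\<phi> y) = y" if "y \<in> aball L x (r / 6)" for y
    using assms(16)[folded r_def] image[OF that] that aball_mono[of "r / 6" r L x]
      aball_mono[of "\<epsilon> + r / 6" r L' x'] \<open>0 < r\<close> \<open>\<epsilon> \<le> r / 2\<close> by auto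
  show ?thesis unfolding r_def[symmetric]
  proof (intro ballI antisym)
    fix y z assume y: "y \<in> aball L x (r / 6)" and z: "z \<in> aball L x (r / 6)"
    then show "adist L' (\<phi> y) (\<phi> z) \<le> adist L y z" by (rule shorten)
    have "adist L y z \<le> r / 3" using adist_le_aball_diameter[OF assms(1,5) y z] by simp
    then have "2 * (\<epsilon> + r / 6) + adist L' (\<phi> y) (\<phi> z) < 2 * r"
      using shorten[OF y z] \<open>\<epsilon> \<le> r / 2\<close> \<open>0 < r\<close> unfolding distrib_left by linarith
    then have "adist L (\<phi>' (\<phi> y)) (\<phi>' (\<phi> z)) \<le> adist L' (\<phi> y) (\<phi> z)"
      by (rule cell_iso_map_adist_le[OF assms(3) cim(2) assms(6) image[OF y] image[OF z]])
    then show "adist L y z \<le> adist L' (\<phi> y) (\<phi> z)" using inverse y z by simp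
  qed
qed

end
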